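(* Let $\mathcal{I}$ be a $\sigma$-ideal on $\mathbb{R}$ satisfying the standing assumptions, and let $L\subseteq\mathbb{R}$ be an $\mathcal{I}$-Luzin set which is linearly independent over $\mathbb{Q}$. Then there exists a set $X\subseteq\mathbb{R}$ such that the family $\{x+L:x\in X\}$ is a partition of $\mathbb{R}$ (its members are pairwise disjoint and cover $\mathbb{R}$).
   Context: Standing assumptions on $\mathcal{I}$: $\mathcal{I}$ is a $\sigma$-ideal of subsets of $\mathbb{R}$ such that $\mathbb{R}\notin\mathcal{I}$; $x+I\in\mathcal{I}$ and $xI\in\mathcal{I}$ for all $x\in\mathbb{R}$, $I\in\mathcal{I}$; every member of $\mathcal{I}$ is contained in a Borel member of $\mathcal{I}$; and for all Borel $A,B\notin\mathcal{I}$ the set $A-B$ has nonempty interior. A set $L\subseteq\mathbb{R}$ is $\mathcal{I}$-Luzin if $|L|=\mathfrak{c}$ and $L\cap I$ is countable for every $I\in\mathcal{I}$. *)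

theory Defs
  imports "HOL-Analysis.Analysis" "HOL-Library.Equipollence"
begin

definition sigma_ideal :: "real set set \<Rightarrow> bool" where
  "sigma_ideal \<I> \<longleftrightarrow> {} \<in> \<I>
     \<and> (\<forall>A B. A \<in> \<I> \<and> B \<subseteq> A \<longrightarrow> B \<in> \<I>)
     \<and> (\<forall>F :: nat \<Rightarrow> real set. (\<forall>n. F n \<in> \<I>) \<longrightarrow> (\<Union>n. F n) \<in> \<I>)"

definition standing_assumptions :: "real set set \<Rightarrow> bool" where
  "standing_assumptions \<I> \<longleftrightarrow> sigma_ideal \<I>
     \<and> UNIV \<notin> \<I>
     \<and> (\<forall>x. \<forall>I\<in>\<I>. (\<lambda>y. x + y) ` I \<in> \<I> \<and> (\<lambda>y. x * y) ` I \<in> \<I>)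
     \<and> (\<forall>I\<in>\<I>. \<exists>B\<in>\<I>. B \<in> sets borel \<and> I \<subseteq> B)
     \<and> (\<forall>A B. A \<in> sets borel \<and> B \<in> sets borel \<and> A \<notin> \<I> \<and> B \<notin> \<I>
            \<longrightarrow> interior {a - b | a b. a \<in> A \<and> b \<in> B} \<noteq> {})"

definition Luzin :: "real set set \<Rightarrow> real set \<Rightarrow> bool" where
  "Luzin \<I> L \<longleftrightarrow> L \<approx> (UNIV :: real set) \<and> (\<forall>I\<in>\<I>. countable (L \<inter> I))"

definition rat_lin_indep :: "real set \<Rightarrow> bool" where
  "rat_lin_indep L \<longleftrightarrow> (\<forall>F c. finite F \<and> F \<subseteq> L \<and> (\<forall>x\<in>F. c x \<in> \<rat>)
      \<and> (\<Sum>x\<in>F. c x * x) = 0 \<longrightarrow> (\<forall>x\<in>F. c x = 0))"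

end

theory Submission imports Defs begin

(* The I-Luzin hypothesis is
   only used through |L| = c.

   The proof is a transfinite recursion of length c, isolated as an abstract
   lemma (transfinite_partition): if every point a can be covered by a set T x
   that is either already chosen or disjoint from all members of a given family
   of fewer than c already chosen sets, then some subfamily of the T x partitions
   the whole space.  The real-specific input is the extension step
   (translate_extension): by rational independence, a translate a - l + L meets
   a fixed translate y + L (with a - y not in L) for at most three l in L, so
   fewer than c translates exclude fewer than c choices of l, and |L| = c leaves
   a free choice. *)

unbundle cardinal_syntax

lemma finite_ordLess_infinite_set:
  assumes "finite A" "\<not> finite B"
  shows "|A| <o |B|"
  using finite_ordLess_infinite[OF card_of_Well_order card_of_Well_order] assms
  by (simp add: Field_card_of)

text \<open>A union of fewer than \<open>|UNIV|\<close> finite sets has fewer than \<open>|UNIV|\<close> elements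
  (no regularity of the cardinal is needed, since the pieces are finite).\<close>

lemma small_UNION_finite:
  fixes A :: "'i \<Rightarrow> 'a set"
  assumes inf: "\<not> finite (UNIV :: 'a set)"
    and small: "|I| <o |UNIV :: 'a set|"
    and fin: "\<And>i. i \<in> I \<Longrightarrow> finite (A i)"
  shows "|\<Union>i\<in>I. A i| <o |UNIV :: 'a set|"
proof (cases "finite I")
  case True
  then have "finite (\<Union>i\<in>I. A i)" using fin by blast
  then show ?thesis using finite_ordLess_infinite_set inf by blast
next
  case False
  have "|A i| \<le>o |I|" if "i \<in> I" for i
    using finite_ordLess_infinite_set[OF fin[OF that] False] by (rule ordLess_imp_ordLeq)
  then have "|\<Union>i\<in>I. A i| \<le>o |I|"
    using card_of_UNION_ordLeq_infinite[OF False ordLeq_refl[OF card_of_Card_order]] by blast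
  then show ?thesis using small ordLeq_ordLess_trans by blast
qed

text \<open>Enumerate the space in order type \<open>|UNIV|\<close>.  At stage \<open>a\<close> choose an index \<open>x\<close>
  with \<open>a \<in> T x\<close> that is either an earlier choice or has \<open>T x\<close> disjoint from all
  earlier choices.  The indices chosen for the first time form the partition.\<close>

lemma transfinite_partition:
  fixes T :: "'b \<Rightarrow> 'a set"
  assumes extend: "\<And>a Y. |Y| <o |UNIV :: 'a set| \<Longrightarrow>
      \<exists>x. a \<in> T x \<and> (x \<in> Y \<or> (\<forall>y\<in>Y. T x \<inter> T y = {}))"
  shows "\<exists>X. (\<forall>x\<in>X. \<forall>y\<in>X. x \<noteq> y \<longrightarrow> T x \<inter> T y = {}) \<and> (\<Union>x\<in>X. T x) = UNIV"
proof -
  define W where "W = |UNIV :: 'a set|"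
  have WO: "well_order_on UNIV W"
    using card_of_Well_order[of "UNIV :: 'a set"] unfolding W_def Field_card_of .
  define R where "R = W - Id"
  have wfR: "wf R" using WO unfolding well_order_on_def R_def by blast
  have total: "(a, b) \<in> R \<or> (b, a) \<in> R" if "a \<noteq> b" for a b
    using WO that unfolding well_order_on_def linear_order_on_def total_on_def R_def by blast
  have underS_R: "underS W a = {b. (b, a) \<in> R}" for a
    by (auto simp: underS_def R_def)
  let ?ok = "\<lambda>Y a x. a \<in> T x \<and> (x \<in> Y \<or> (\<forall>y\<in>Y. T x \<inter> T y = {}))"
  define F where "F g a = (SOME x. ?ok (g ` underS W a) a x)" for g :: "'a \<Rightarrow> 'b" and a
  define xf where "xf = wfrec R F"
  have rec: "xf a = F xf a" for a
  proof -
    have "xf a = F (cut xf R a) a" unfolding xf_def by (rule wfrec[OF wfR])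
    moreover have "cut xf R a ` underS W a = xf ` underS W a"
      unfolding underS_R by (auto simp: cut_apply)
    ultimately show ?thesis unfolding F_def by simp
  qed
  have small: "|xf ` underS W a| <o |UNIV :: 'a set|" for a
  proof -
    have "|underS W a| <o W"
      using card_of_underS[of W a] card_of_Card_order[of "UNIV :: 'a set"]
      unfolding W_def Field_card_of by simp
    then show ?thesis using card_of_image ordLeq_ordLess_trans unfolding W_def by blast
  qed
  have choice: "?ok (xf ` underS W a) a (xf a)" for a
    unfolding rec[of a] F_def by (rule someI_ex) (rule extend[OF small])
  define N where "N = {a. xf a \<notin> xf ` underS W a}"
  have later_disjoint: "T (xf b) \<inter> T (xf c) = {}" if "(c, b) \<in> R" "b \<in> N" for b c
    using choice[of b] that unfolding N_def underS_R by blast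
  have disjoint: "\<forall>x\<in>xf ` N. \<forall>y\<in>xf ` N. x \<noteq> y \<longrightarrow> T x \<inter> T y = {}"
  proof (intro ballI impI)
    fix x y assume "x \<in> xf ` N" "y \<in> xf ` N" "x \<noteq> y"
    then obtain b c where "b \<in> N" "c \<in> N" "x = xf b" "y = xf c" "b \<noteq> c" by blast
    then show "T x \<inter> T y = {}"
      using total[of b c] later_disjoint[of b c] later_disjoint[of c b] by blast
  qed
  have covered: "a \<in> (\<Union>x\<in>xf ` N. T x)" for a
  proof -
    obtain b where b: "b \<in> {c. xf c = xf a}"
      and minimal: "\<And>c. (c, b) \<in> R \<Longrightarrow> c \<notin> {c. xf c = xf a}"
      using wfE_min[OF wfR, of a "{c. xf c = xf a}"] by blast
    have "b \<in> N"
    proof -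
      have "xf c \<noteq> xf b" if "(c, b) \<in> R" for c using minimal[OF that] b by simp
      then show ?thesis unfolding N_def underS_R by force
    qed
    moreover have "a \<in> T (xf b)" using choice[of a] b by simp
    ultimately show ?thesis by blast
  qed
  have "(\<Union>x\<in>xf ` N. T x) = UNIV" using covered by blast
  with disjoint show ?thesis by blast
qed

text \<open>Over a rationally independent \<open>L\<close>, a point \<open>z \<notin> L\<close> has essentially one
  representation \<open>z = a + b - c\<close> with \<open>a, b, c \<in> L\<close>: the leading term of any other
  such representation is one of \<open>a, b, c\<close>.  (Compare the coefficients of the
  relation \<open>l + l\<^sub>1 - l\<^sub>2 - a - b + c = 0\<close> at \<open>l\<close>.)\<close>

lemma rat_indep_three_term_repr:
  assumes indep: "rat_lin_indep L" and z: "z \<notin> L"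
    and abc: "a \<in> L" "b \<in> L" "c \<in> L" "z = a + b - c"
    and repr: "l \<in> L" "l1 \<in> L" "l2 \<in> L" "z = l + l1 - l2"
  shows "l \<in> {a, b, c}"
proof (rule ccontr)
  assume l_new: "l \<notin> {a, b, c}"
  define \<delta> where "\<delta> p x = (if x = p then 1 else (0::real))" for p x :: real
  define coeff where "coeff x = \<delta> l x + \<delta> l1 x - \<delta> l2 x - \<delta> a x - \<delta> b x + \<delta> c x" for x
  define F where "F = {l, l1, l2, a, b, c}"
  have F: "finite F" "F \<subseteq> L" using abc repr by (auto simp: F_def)
  have pick: "(\<Sum>x\<in>F. \<delta> p x * x) = p" if "p \<in> F" for p
  proof -
    have "(\<Sum>x\<in>F. \<delta> p x * x) = (\<Sum>x\<in>F. if x = p then x else 0)"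
      by (rule sum.cong) (auto simp: \<delta>_def)
    then show ?thesis using that F by simp
  qed
  have "(\<Sum>x\<in>F. coeff x * x) = (\<Sum>x\<in>F. \<delta> l x * x) + (\<Sum>x\<in>F. \<delta> l1 x * x)
      - (\<Sum>x\<in>F. \<delta> l2 x * x) - (\<Sum>x\<in>F. \<delta> a x * x) - (\<Sum>x\<in>F. \<delta> b x * x)
      + (\<Sum>x\<in>F. \<delta> c x * x)"
    by (simp add: coeff_def algebra_simps sum.distrib sum_subtractf)
  also have "\<dots> = (l + l1 - l2) - (a + b - c)"
    using pick[of l] pick[of l1] pick[of l2] pick[of a] pick[of b] pick[of c] by (simp add: F_def)
  also have "\<dots> = 0" using abc repr by simp
  finally have "(\<Sum>x\<in>F. coeff x * x) = 0" .
  moreover have "\<forall>x\<in>F. coeff x \<in> \<rat>" by (auto simp: coeff_def \<delta>_def)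
  ultimately have "coeff l = 0" using indep F unfolding rat_lin_indep_def F_def by blast
  then have "l = l2" "l \<noteq> l1" using l_new by (auto simp: coeff_def \<delta>_def split: if_splits)
  then have "z = l1" using repr by simp
  then show False using z repr by simp
qed

lemma rat_indep_finite_leading_terms:
  assumes indep: "rat_lin_indep L" and z: "z \<notin> L"
  shows "finite {l \<in> L. \<exists>l1\<in>L. \<exists>l2\<in>L. z = l + l1 - l2}" (is "finite ?S")
proof (cases "?S = {}")
  case True
  then show ?thesis by (metis finite.emptyI)
next
  case False
  then obtain a b c where abc: "a \<in> L" "b \<in> L" "c \<in> L" "z = a + b - c" by blast
  have "?S \<subseteq> {a, b, c}" using rat_indep_three_term_repr[OF indep z abc] by blast
  then show ?thesis using finite_subset by blast
qed

text \<open>Since \<open>(a - l) + L\<close> meets \<open>y + L\<close> exactly when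
  \<open>a - y = l + l\<^sub>2 - l\<^sub>1\<close>, each \<open>y\<close> rules out finitely many \<open>l\<close>, so fewer
  than \<open>|L| = \<c>\<close> choices of \<open>l\<close> are excluded in total.\<close>

lemma translate_extension:
  fixes L Y :: "real set"
  assumes indep: "rat_lin_indep L" and card_L: "L \<approx> (UNIV :: real set)"
    and small: "|Y| <o |UNIV :: real set|"
  shows "\<exists>x. a \<in> (\<lambda>l. x + l) ` L \<and> (x \<in> Y \<or>
           (\<forall>y\<in>Y. (\<lambda>l. x + l) ` L \<inter> (\<lambda>l. y + l) ` L = {}))"
proof (cases "\<exists>y\<in>Y. a - y \<in> L")
  case True
  then obtain y where "y \<in> Y" "a - y \<in> L" by blast
  then have "a \<in> (\<lambda>l. y + l) ` L" by (intro image_eqI[of _ _ "a - y"]) simp_all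
  with \<open>y \<in> Y\<close> show ?thesis by (intro exI[of _ y]) blast
next
  case False
  define Bad where "Bad y = {l \<in> L. \<exists>l1\<in>L. \<exists>l2\<in>L. a - y = l + l1 - l2}" for y
  have "finite (Bad y)" if "y \<in> Y" for y
    unfolding Bad_def using rat_indep_finite_leading_terms[OF indep] False that by blast
  then have "|\<Union>y\<in>Y. Bad y| <o |UNIV :: real set|"
    by (rule small_UNION_finite[OF infinite_UNIV_char_0 small])
  moreover have "|UNIV :: real set| \<le>o |L|"
    using card_L unfolding eqpoll_iff_card_of_ordIso by (blast intro: ordIso_imp_ordLeq ordIso_symmetric)
  ultimately have "\<not> L \<subseteq> (\<Union>y\<in>Y. Bad y)"
    using card_of_mono1 ordLeq_transitive not_ordLess_ordLeq by blast
  then obtain l where l: "l \<in> L" "\<forall>y\<in>Y. l \<notin> Bad y" by blast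
  have "(\<lambda>l'. (a - l) + l') ` L \<inter> (\<lambda>l'. y + l') ` L = {}" if "y \<in> Y" for y
  proof -
    have "a - l + l1 \<noteq> y + l2" if "l1 \<in> L" "l2 \<in> L" for l1 l2
    proof -
      have "a - y \<noteq> l + l2 - l1" using l \<open>y \<in> Y\<close> that unfolding Bad_def by blast
      then show ?thesis by linarith
    qed
    then show ?thesis by blast
  qed
  moreover have "a \<in> (\<lambda>l'. (a - l) + l') ` L" using l by (intro image_eqI[of _ _ l]) simp_all
  ultimately show ?thesis by (intro exI[of _ "a - l"]) blast
qed

theorem mainTheorem14:
  fixes \<I> :: "real set set" and L :: "real set"
  assumes "standing_assumptions \<I>"
    and "Luzin \<I> L"
    and "rat_lin_indep L"
  shows "\<exists>X :: real set.
           (\<forall>x\<in>X. \<forall>y\<in>X. x \<noteq> y \<longrightarrow> ((\<lambda>l. x + l) ` L) \<inter> ((\<lambda>l. y + l) ` L) = {})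
         \<and> (\<Union>x\<in>X. (\<lambda>l. x + l) ` L) = UNIV"
proof -
  have "L \<approx> (UNIV :: real set)" using \<open>Luzin \<I> L\<close> unfolding Luzin_def by blast
  then have "\<exists>x. a \<in> (\<lambda>l. x + l) ` L \<and> (x \<in> Y \<or>
      (\<forall>y\<in>Y. (\<lambda>l. x + l) ` L \<inter> (\<lambda>l. y + l) ` L = {}))"
    if "|Y| <o |UNIV :: real set|" for a Y
    using translate_extension[OF \<open>rat_lin_indep L\<close>] that by blast
  then show ?thesis by (rule transfinite_partition)
qed

end
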